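(* Let $(x,y)$ be a random pair satisfying the linear-model assumption and the irrepresentable condition $\mu_{S^*}<1$ described in the context. Then for every $S\subseteq S^*$, $$\max_{j\notin S^*}|Z_j^S|\le \mu_{S^*}\max_{i\in S^*\setminus S}|Z_i^S|,$$ with the convention $\max\emptyset=0$.
   Context: $(x,y)$ is a random pair with $x\in\mathbb{R}^d$, $y\in\mathbb{R}$, both square integrable. Linear-model assumption: $\mathbb{E}[x]=0$, $y=\langle\beta^*,x\rangle+\epsilon$ for some $\beta^*\in\mathbb{R}^d$, with $\mathbb{E}[\epsilon\mid x]=0$. Let $S^*=\{i:\beta^*_i\neq 0\}$, $s^*=|S^*|$, $\Sigma$ the covariance matrix of $x$, and for $F\subseteq[d]$ let $\Sigma_F$ be the submatrix with rows and columns in $F$, $x_F$ the subvector of $x$ indexed by $F$, and $\mathrm{Cov}(x_F,x_j)\in\mathbb{R}^{|F|}$ the vector of covariances $\mathrm{Cov}(x_i,x_j)$, $i\in F$. Define $\mu_F=\max_{j\in[d]\setminus F}\|\Sigma_F^{-1}\mathrm{Cov}(x_F,x_j)\|_1$ (when $\Sigma_F$ is invertible). Irrepresentable condition: for all $F\subseteq[d]$ with $|F|=s^*$, $\Sigma_F$ is invertible and $0\le\mu_F<1$. Let $\mathcal{R}(\beta)=\mathbb{E}[(y-\langle x,\beta\rangle)^2]$, and for $S\subseteq S^*$ let $\beta^S\in\arg\min_{\mathrm{supp}(\beta)\subseteq S}\mathcal{R}(\beta)$. Define $Z_i^S=\mathbb{E}[x_i(y-\langle x,\beta^S\rangle)]$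 for $i\in[d]$. *)

theory Defs
  imports "HOL-Probability.Probability" "Jordan_Normal_Form.Matrix"
begin

text \<open>Random vector x in R^d is modelled by the family X i (i < d) of real random
  variables on a probability space M; y is Y. Vectors beta in R^d are functions
  nat => real (only the coordinates i < d matter).\<close>

definition cov :: "'a measure \<Rightarrow> ('a \<Rightarrow> real) \<Rightarrow> ('a \<Rightarrow> real) \<Rightarrow> real" where
  "cov M U V = (\<integral>\<omega>. (U \<omega> - (\<integral>t. U t \<partial>M)) * (V \<omega> - (\<integral>t. V t \<partial>M)) \<partial>M)"

definition idx :: "nat set \<Rightarrow> nat \<Rightarrow> nat" where
  "idx F a = sorted_list_of_set F ! a"

definition Sigma_sub :: "'a measure \<Rightarrow> (nat \<Rightarrow> 'a \<Rightarrow> real) \<Rightarrow> nat set \<Rightarrow> real mat" where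
  "Sigma_sub M X F = mat (card F) (card F) (\<lambda>(a,b). cov M (X (idx F a)) (X (idx F b)))"

definition cov_vec :: "'a measure \<Rightarrow> (nat \<Rightarrow> 'a \<Rightarrow> real) \<Rightarrow> nat set \<Rightarrow> nat \<Rightarrow> real vec" where
  "cov_vec M X F j = vec (card F) (\<lambda>a. cov M (X (idx F a)) (X j))"

definition l1norm :: "real vec \<Rightarrow> real" where
  "l1norm v = (\<Sum>a<dim_vec v. \<bar>v $ a\<bar>)"

definition mat_inv :: "real mat \<Rightarrow> real mat" where
  "mat_inv A = (SOME B. B \<in> carrier_mat (dim_row A) (dim_row A) \<and> inverts_mat A B \<and> inverts_mat B A)"

text \<open>mu_F = max over j in [d] - F of || Sigma_F^{-1} Cov(x_F,x_j) ||_1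
  (max of the empty set taken to be 0; all values are >= 0).\<close>
definition mu :: "'a measure \<Rightarrow> (nat \<Rightarrow> 'a \<Rightarrow> real) \<Rightarrow> nat \<Rightarrow> nat set \<Rightarrow> real" where
  "mu M X d F = Max (insert 0
     {l1norm (mat_inv (Sigma_sub M X F) *\<^sub>v cov_vec M X F j) | j. j < d \<and> j \<notin> F})"

definition irrepresentable :: "'a measure \<Rightarrow> (nat \<Rightarrow> 'a \<Rightarrow> real) \<Rightarrow> nat \<Rightarrow> nat \<Rightarrow> bool" where
  "irrepresentable M X d s \<longleftrightarrow>
     (\<forall>F. F \<subseteq> {..<d} \<and> card F = s \<longrightarrow>
        invertible_mat (Sigma_sub M X F) \<and> 0 \<le> mu M X d F \<and> mu M X d F < 1)"

definition inner_d :: "nat \<Rightarrow> (nat \<Rightarrow> real) \<Rightarrow> (nat \<Rightarrow> 'a \<Rightarrow> real) \<Rightarrow> 'a \<Rightarrow> real" where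
  "inner_d d \<beta> X \<omega> = (\<Sum>i<d. \<beta> i * X i \<omega>)"

definition risk :: "'a measure \<Rightarrow> nat \<Rightarrow> (nat \<Rightarrow> 'a \<Rightarrow> real) \<Rightarrow> ('a \<Rightarrow> real) \<Rightarrow> (nat \<Rightarrow> real) \<Rightarrow> real" where
  "risk M d X Y \<beta> = (\<integral>\<omega>. (Y \<omega> - inner_d d \<beta> X \<omega>)\<^sup>2 \<partial>M)"

definition supp_in :: "(nat \<Rightarrow> real) \<Rightarrow> nat set \<Rightarrow> bool" where
  "supp_in \<beta> S \<longleftrightarrow> (\<forall>i. i \<notin> S \<longrightarrow> \<beta> i = 0)"

definition is_restricted_min :: "'a measure \<Rightarrow> nat \<Rightarrow> (nat \<Rightarrow> 'a \<Rightarrow> real) \<Rightarrow> ('a \<Rightarrow> real) \<Rightarrow> nat set \<Rightarrow> (nat \<Rightarrow> real) \<Rightarrow> bool" where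
  "is_restricted_min M d X Y S \<beta> \<longleftrightarrow>
     supp_in \<beta> S \<and> (\<forall>\<beta>'. supp_in \<beta>' S \<longrightarrow> risk M d X Y \<beta> \<le> risk M d X Y \<beta>')"

definition Zres :: "'a measure \<Rightarrow> nat \<Rightarrow> (nat \<Rightarrow> 'a \<Rightarrow> real) \<Rightarrow> ('a \<Rightarrow> real) \<Rightarrow> (nat \<Rightarrow> real) \<Rightarrow> nat \<Rightarrow> real" where
  "Zres M d X Y \<beta> i = (\<integral>\<omega>. X i \<omega> * (Y \<omega> - inner_d d \<beta> X \<omega>) \<partial>M)"

definition sigma_x :: "'a measure \<Rightarrow> nat \<Rightarrow> (nat \<Rightarrow> 'a \<Rightarrow> real) \<Rightarrow> 'a measure" where
  "sigma_x M d X = vimage_algebra (space M) (\<lambda>\<omega>. restrict (\<lambda>i. X i \<omega>) {..<d}) (PiM {..<d} (\<lambda>_. borel))"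

end

theory Submission
  imports Defs
begin

text \<open>Let \<open>\<delta> = \<beta>\<^sup>* - \<beta>\<^sup>S\<close>, which vanishes outside \<open>S\<^sup>*\<close>. The noise assumption makes all
  residual moments of \<open>\<beta>\<^sup>*\<close> vanish, so every \<open>Z\<^sub>j\<close> is linear in \<open>\<delta>\<close>:
  \<open>Z\<^sub>j = Cov(x\<^sub>F, x\<^sub>j) \<bullet> \<delta>\<^sub>F\<close> with \<open>F = S\<^sup>*\<close>. For \<open>j \<in> F\<close> this reads \<open>Z\<^sub>F = \<Sigma>\<^sub>F \<delta>\<^sub>F\<close>, so for
  \<open>j \<notin> F\<close> the symmetry of \<open>\<Sigma>\<^sub>F\<close> gives \<open>Z\<^sub>j = (\<Sigma>\<^sub>F\<^sup>-\<^sup>1 Cov(x\<^sub>F, x\<^sub>j)) \<bullet> Z\<^sub>F\<close>. Optimality of \<open>\<beta>\<^sup>S\<close>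
  forces \<open>Z\<^sub>i = 0\<close> for \<open>i \<in> S\<close>, and the \<open>\<ell>\<^sub>1\<close>-\<open>\<ell>\<^sub>\<infinity>\<close> bound on the scalar product finishes the proof.\<close>

lemma linear_coeff_eq_0_if_quadratic_nonneg:
  fixes a b :: real
  assumes a: "0 \<le> a" and nonneg: "\<And>t. 0 \<le> t\<^sup>2 * a - 2 * t * b"
  shows "b = 0"
proof -
  have "0 \<le> (b / (a + 1))\<^sup>2 * a - 2 * (b / (a + 1)) * b" by (rule nonneg)
  also have "\<dots> = - (b\<^sup>2 * (a + 2)) / (a + 1)\<^sup>2"
    using a by (simp add: field_simps power2_eq_square add_nonneg_eq_0_iff)
  finally have "b\<^sup>2 * (a + 2) \<le> 0"
    using a by (simp add: divide_le_0_iff)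
  then show ?thesis using a by (simp add: mult_le_0_iff)
qed

lemma integrable_mult_of_square_integrable:
  fixes f g :: "'a \<Rightarrow> real"
  assumes "f \<in> borel_measurable M" "g \<in> borel_measurable M"
    "integrable M (\<lambda>x. (f x)\<^sup>2)" "integrable M (\<lambda>x. (g x)\<^sup>2)"
  shows "integrable M (\<lambda>x. f x * g x)"
proof (rule Bochner_Integration.integrable_bound[where f="\<lambda>x. (f x)\<^sup>2 + (g x)\<^sup>2"])
  show "integrable M (\<lambda>x. (f x)\<^sup>2 + (g x)\<^sup>2)" using assms by auto
  show "(\<lambda>x. f x * g x) \<in> borel_measurable M" using assms by auto
  have "\<bar>a * b\<bar> \<le> a\<^sup>2 + b\<^sup>2" for a b :: real
    using sum_squares_bound[of "\<bar>a\<bar>" "\<bar>b\<bar>"] abs_ge_zero[of "a * b"]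
    unfolding abs_mult power2_abs by linarith
  then show "AE x in M. norm (f x * g x) \<le> norm ((f x)\<^sup>2 + (g x)\<^sup>2)" by auto
qed

lemma square_integrable_add:
  fixes f g :: "'a \<Rightarrow> real"
  assumes "f \<in> borel_measurable M" "g \<in> borel_measurable M"
    "integrable M (\<lambda>x. (f x)\<^sup>2)" "integrable M (\<lambda>x. (g x)\<^sup>2)"
  shows "integrable M (\<lambda>x. (f x + g x)\<^sup>2)"
proof -
  have "(\<lambda>x. (f x + g x)\<^sup>2) = (\<lambda>x. (f x)\<^sup>2 + 2 * (f x * g x) + (g x)\<^sup>2)"
    by (auto simp: power2_eq_square algebra_simps)
  then show ?thesis
    using assms integrable_mult_of_square_integrable[OF assms] by auto
qed

lemma square_integrable_sum:
  fixes f :: "'b \<Rightarrow> 'a \<Rightarrow> real"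
  assumes "finite I" "\<And>i. i \<in> I \<Longrightarrow> f i \<in> borel_measurable M"
    "\<And>i. i \<in> I \<Longrightarrow> integrable M (\<lambda>x. (f i x)\<^sup>2)"
  shows "integrable M (\<lambda>x. (\<Sum>i\<in>I. f i x)\<^sup>2)"
  using assms
proof (induction I rule: finite_induct)
  case (insert a I)
  have "(\<lambda>x. \<Sum>i\<in>I. f i x) \<in> borel_measurable M" using insert by auto
  then show ?case using insert square_integrable_add[of "f a" M "\<lambda>x. \<Sum>i\<in>I. f i x"] by auto
qed simp

subsection \<open>Orthogonality of the noise\<close>

lemma subalgebra_sigma_x:
  assumes "\<And>i. i < d \<Longrightarrow> X i \<in> borel_measurable M"
  shows "subalgebra M (sigma_x M d X)"
proof -
  define f where "f = (\<lambda>\<omega>. restrict (\<lambda>i. X i \<omega>) {..<d})"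
  have f: "f \<in> M \<rightarrow>\<^sub>M PiM {..<d} (\<lambda>_. borel)"
    unfolding f_def using assms by (intro measurable_restrict) auto
  then have "f \<in> space M \<rightarrow> space (PiM {..<d} (\<lambda>_. borel :: real measure))"
    using measurable_space[OF f] by blast
  then show ?thesis
    unfolding subalgebra_def sigma_x_def f_def[symmetric]
    using measurable_sets[OF f] by (auto simp: sets_vimage_algebra2)
qed

lemma sigma_x_measurable:
  assumes "i < d"
  shows "X i \<in> borel_measurable (sigma_x M d X)"
proof -
  define f where "f = (\<lambda>\<omega>. restrict (\<lambda>i. X i \<omega>) {..<d})"
  have "f \<in> sigma_x M d X \<rightarrow>\<^sub>M PiM {..<d} (\<lambda>_. borel)"
    unfolding sigma_x_def f_def[symmetric]
    by (rule measurable_vimage_algebra1) (auto simp: f_def space_PiM)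
  moreover have "(\<lambda>x. x i) \<in> PiM {..<d} (\<lambda>_. borel) \<rightarrow>\<^sub>M (borel :: real measure)"
    using assms by (intro measurable_component_singleton) auto
  moreover have "X i = (\<lambda>x. x i) \<circ> f" using assms by (auto simp: f_def)
  ultimately show ?thesis by (metis measurable_comp)
qed

lemma integral_mult_eq_0_if_cond_exp_eq_0:
  assumes "prob_space M" and X_rv: "\<And>i. i < d \<Longrightarrow> X i \<in> borel_measurable M"
    and e: "e \<in> borel_measurable M"
    and cond_exp: "AE \<omega> in M. real_cond_exp M (sigma_x M d X) e \<omega> = 0"
    and Xe: "integrable M (\<lambda>\<omega>. X j \<omega> * e \<omega>)" and j: "j < d"
  shows "(\<integral>\<omega>. X j \<omega> * e \<omega> \<partial>M) = 0"
proof -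
  interpret prob_space M by fact
  interpret finite_measure_subalgebra M "sigma_x M d X"
    by unfold_locales (rule subalgebra_sigma_x[OF X_rv])
  have "(\<integral>\<omega>. X j \<omega> * e \<omega> \<partial>M) = (\<integral>\<omega>. X j \<omega> * real_cond_exp M (sigma_x M d X) e \<omega> \<partial>M)"
    using real_cond_exp_intg(2)[OF Xe sigma_x_measurable[OF j] e] by simp
  also have "\<dots> = 0"
    using cond_exp by (subst integral_cong_AE[where g="\<lambda>_. 0"]) (use X_rv j in auto)
  finally show ?thesis .
qed

definition sub_vec :: "nat set \<Rightarrow> (nat \<Rightarrow> 'b) \<Rightarrow> 'b vec" where
  "sub_vec F f = vec (card F) (\<lambda>a. f (idx F a))"

lemma sub_vec_carrier [simp]: "sub_vec F f \<in> carrier_vec (card F)"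
  and dim_sub_vec [simp]: "dim_vec (sub_vec F f) = card F"
  and index_sub_vec [simp]: "a < card F \<Longrightarrow> sub_vec F f $ a = f (idx F a)"
  by (simp_all add: sub_vec_def)

lemma bij_betw_idx: "finite F \<Longrightarrow> bij_betw (idx F) {..<card F} F"
  unfolding idx_def[abs_def] by (intro bij_betw_nth) auto

lemma idx_in: "finite F \<Longrightarrow> a < card F \<Longrightarrow> idx F a \<in> F"
  using bij_betw_idx bij_betwE by blast

lemma scalar_prod_sub_vec:
  "finite F \<Longrightarrow> sub_vec F f \<bullet> sub_vec F g = (\<Sum>i\<in>F. f i * g i)"
  using sum.reindex_bij_betw[OF bij_betw_idx, of F "\<lambda>i. f i * g i"]
  by (simp add: scalar_prod_def sub_vec_def atLeast0LessThan)

lemma cov_commute: "cov M U V = cov M V U"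
  by (simp add: cov_def mult.commute)

lemma cov_centered:
  "(\<integral>\<omega>. U \<omega> \<partial>M) = 0 \<Longrightarrow> (\<integral>\<omega>. V \<omega> \<partial>M) = 0 \<Longrightarrow> cov M U V = (\<integral>\<omega>. U \<omega> * V \<omega> \<partial>M)"
  by (simp add: cov_def)

lemma cov_vec_eq_sub_vec: "cov_vec M X F j = sub_vec F (\<lambda>i. cov M (X i) (X j))"
  by (simp add: cov_vec_def sub_vec_def)

lemma Sigma_sub_carrier: "Sigma_sub M X F \<in> carrier_mat (card F) (card F)"
  and dim_row_Sigma_sub [simp]: "dim_row (Sigma_sub M X F) = card F"
  by (simp_all add: Sigma_sub_def)

lemma row_Sigma_sub:
  "a < card F \<Longrightarrow> row (Sigma_sub M X F) a = cov_vec M X F (idx F a)"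
  by (auto simp: Sigma_sub_def cov_vec_def cov_commute)

lemma transpose_Sigma_sub: "transpose_mat (Sigma_sub M X F) = Sigma_sub M X F"
  by (auto simp: Sigma_sub_def cov_commute)

lemma mat_inv_right:
  assumes "invertible_mat A" "A \<in> carrier_mat n n"
  shows "mat_inv A \<in> carrier_mat n n" "A * mat_inv A = 1\<^sub>m n"
proof -
  obtain B where B: "inverts_mat A B" "inverts_mat B A"
    using assms(1) unfolding invertible_mat_def by blast
  have "dim_col B = n" "dim_row B = n"
    using assms(2) arg_cong[OF B(1)[unfolded inverts_mat_def], of dim_col]
      arg_cong[OF B(2)[unfolded inverts_mat_def], of dim_col]
    by auto
  then have "\<exists>B. B \<in> carrier_mat (dim_row A) (dim_row A) \<and> inverts_mat A B \<and> inverts_mat B A"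
    using B assms(2) by auto
  from someI_ex[OF this] assms(2)
  show "mat_inv A \<in> carrier_mat n n" "A * mat_inv A = 1\<^sub>m n"
    unfolding mat_inv_def inverts_mat_def by auto
qed

lemma scalar_prod_inverse_mult_symmetric:
  fixes A B :: "'a :: comm_ring_1 mat"
  assumes A: "A \<in> carrier_mat n n" and B: "B \<in> carrier_mat n n"
    and sym: "transpose_mat A = A" and AB: "A * B = 1\<^sub>m n"
    and c: "c \<in> carrier_vec n" and v: "v \<in> carrier_vec n"
  shows "(B *\<^sub>v c) \<bullet> (A *\<^sub>v v) = c \<bullet> v"
proof -
  have "(B *\<^sub>v c) \<bullet> (A *\<^sub>v v) = (transpose_mat A *\<^sub>v (B *\<^sub>v c)) \<bullet> v"
    using A B c v by (simp add: transpose_vec_mult_scalar)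
  also have "transpose_mat A *\<^sub>v (B *\<^sub>v c) = c"
    using A B c by (simp add: sym assoc_mult_mat_vec[symmetric] AB)
  finally show ?thesis .
qed

lemma abs_scalar_prod_le_l1norm:
  fixes w z :: "real vec"
  assumes w: "w \<in> carrier_vec n" and z: "z \<in> carrier_vec n"
    and bound: "\<And>a. a < n \<Longrightarrow> \<bar>z $ a\<bar> \<le> m"
  shows "\<bar>w \<bullet> z\<bar> \<le> l1norm w * m"
proof -
  have "\<bar>w \<bullet> z\<bar> \<le> (\<Sum>a<n. \<bar>w $ a\<bar> * \<bar>z $ a\<bar>)"
    using z by (simp add: scalar_prod_def atLeast0LessThan abs_mult[symmetric])
  also have "\<dots> \<le> (\<Sum>a<n. \<bar>w $ a\<bar> * m)"
    by (intro sum_mono mult_left_mono bound) auto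
  also have "\<dots> = l1norm w * m"
    using w by (simp add: l1norm_def sum_distrib_right)
  finally show ?thesis .
qed

lemma abs_scalar_prod_le_l1norm_inverse:
  fixes A :: "real mat"
  assumes A: "A \<in> carrier_mat n n" "transpose_mat A = A" "invertible_mat A"
    and c: "c \<in> carrier_vec n" and v: "v \<in> carrier_vec n"
    and bound: "\<And>a. a < n \<Longrightarrow> \<bar>(A *\<^sub>v v) $ a\<bar> \<le> m"
  shows "\<bar>c \<bullet> v\<bar> \<le> l1norm (mat_inv A *\<^sub>v c) * m"
proof -
  note A_inv = mat_inv_right[OF A(3,1)]
  have "c \<bullet> v = (mat_inv A *\<^sub>v c) \<bullet> (A *\<^sub>v v)"
    using A A_inv c v by (simp add: scalar_prod_inverse_mult_symmetric)
  also have "\<bar>\<dots>\<bar> \<le> l1norm (mat_inv A *\<^sub>v c) * m"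
    using A A_inv c v bound by (intro abs_scalar_prod_le_l1norm[where n = n]) auto
  finally show ?thesis .
qed

lemma l1norm_le_mu:
  "j < d \<Longrightarrow> j \<notin> F \<Longrightarrow> l1norm (mat_inv (Sigma_sub M X F) *\<^sub>v cov_vec M X F j) \<le> mu M X d F"
  unfolding mu_def by (rule Max_ge) auto

lemma mu_nonneg: "0 \<le> mu M X d F"
  unfolding mu_def by (rule Max_ge) auto

subsection \<open>Residual moments of a square-integrable design\<close>

lemma inner_d_update:
  "i < d \<Longrightarrow> inner_d d (\<beta>(i := \<beta> i + t)) X \<omega> = inner_d d \<beta> X \<omega> + t * X i \<omega>"
  by (simp add: inner_d_def sum.remove[of "{..<d}" i] distrib_right)

locale square_integrable_design =
  fixes M :: "'a measure" and d :: nat and X :: "nat \<Rightarrow> 'a \<Rightarrow> real" and Y :: "'a \<Rightarrow> real"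
  assumes X_rv: "\<And>i. i < d \<Longrightarrow> X i \<in> borel_measurable M"
    and X_sq: "\<And>i. i < d \<Longrightarrow> integrable M (\<lambda>\<omega>. (X i \<omega>)\<^sup>2)"
    and Y_rv: "Y \<in> borel_measurable M"
    and Y_sq: "integrable M (\<lambda>\<omega>. (Y \<omega>)\<^sup>2)"
begin

lemma integrable_X_mult_X: "i < d \<Longrightarrow> j < d \<Longrightarrow> integrable M (\<lambda>\<omega>. X i \<omega> * X j \<omega>)"
  by (intro integrable_mult_of_square_integrable X_rv X_sq)

lemma residual_measurable: "(\<lambda>\<omega>. Y \<omega> - inner_d d \<beta> X \<omega>) \<in> borel_measurable M"
  unfolding inner_d_def using X_rv Y_rv by auto

lemma residual_square_integrable: "integrable M (\<lambda>\<omega>. (Y \<omega> - inner_d d \<beta> X \<omega>)\<^sup>2)"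
proof -
  have "integrable M (\<lambda>\<omega>. (\<Sum>i<d. - \<beta> i * X i \<omega>)\<^sup>2)"
    using X_rv X_sq by (intro square_integrable_sum) (auto simp: power_mult_distrib)
  then have "integrable M (\<lambda>\<omega>. (Y \<omega> + (\<Sum>i<d. - \<beta> i * X i \<omega>))\<^sup>2)"
    using X_rv Y_rv Y_sq by (intro square_integrable_add) auto
  then show ?thesis by (simp add: inner_d_def sum_negf)
qed

lemma integrable_X_mult_residual:
  "i < d \<Longrightarrow> integrable M (\<lambda>\<omega>. X i \<omega> * (Y \<omega> - inner_d d \<beta> X \<omega>))"
  by (intro integrable_mult_of_square_integrable X_rv X_sq residual_measurable
      residual_square_integrable)

lemma Zres_expand:
  assumes "j < d"
  shows "Zres M d X Y \<beta> j
           = (\<integral>\<omega>. X j \<omega> * Y \<omega> \<partial>M) - (\<Sum>i<d. \<beta> i * (\<integral>\<omega>. X j \<omega> * X i \<omega> \<partial>M))"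
proof -
  have XY: "integrable M (\<lambda>\<omega>. X j \<omega> * Y \<omega>)"
    using assms X_rv X_sq Y_rv Y_sq by (intro integrable_mult_of_square_integrable)
  have "Zres M d X Y \<beta> j = (\<integral>\<omega>. X j \<omega> * Y \<omega> - (\<Sum>i<d. \<beta> i * (X j \<omega> * X i \<omega>)) \<partial>M)"
    unfolding Zres_def inner_d_def
    by (simp add: right_diff_distrib sum_distrib_left algebra_simps)
  also have "\<dots> = (\<integral>\<omega>. X j \<omega> * Y \<omega> \<partial>M) - (\<integral>\<omega>. (\<Sum>i<d. \<beta> i * (X j \<omega> * X i \<omega>)) \<partial>M)"
    using XY assms integrable_X_mult_X by (intro Bochner_Integration.integral_diff) auto
  also have "(\<integral>\<omega>. (\<Sum>i<d. \<beta> i * (X j \<omega> * X i \<omega>)) \<partial>M)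
               = (\<Sum>i<d. \<beta> i * (\<integral>\<omega>. X j \<omega> * X i \<omega> \<partial>M))"
    using assms integrable_X_mult_X by (subst Bochner_Integration.integral_sum) auto
  finally show ?thesis .
qed

lemma Zres_diff:
  assumes "\<And>i. i < d \<Longrightarrow> i \<notin> F \<Longrightarrow> \<beta> i = \<beta>' i" "F \<subseteq> {..<d}" "j < d"
  shows "Zres M d X Y \<beta>' j - Zres M d X Y \<beta> j
           = (\<Sum>i\<in>F. (\<beta> i - \<beta>' i) * (\<integral>\<omega>. X j \<omega> * X i \<omega> \<partial>M))"
proof -
  have "Zres M d X Y \<beta>' j - Zres M d X Y \<beta> j
          = (\<Sum>i<d. (\<beta> i - \<beta>' i) * (\<integral>\<omega>. X j \<omega> * X i \<omega> \<partial>M))"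
    using assms(3) by (simp add: Zres_expand left_diff_distrib sum_subtractf)
  also have "\<dots> = (\<Sum>i\<in>F. (\<beta> i - \<beta>' i) * (\<integral>\<omega>. X j \<omega> * X i \<omega> \<partial>M))"
    using assms(1,2) by (intro sum.mono_neutral_right) auto
  finally show ?thesis .
qed

lemma risk_update:
  assumes "i < d"
  shows "risk M d X Y (\<beta>(i := \<beta> i + t))
           = risk M d X Y \<beta> - 2 * t * Zres M d X Y \<beta> i + t\<^sup>2 * (\<integral>\<omega>. (X i \<omega>)\<^sup>2 \<partial>M)"
proof -
  define R where "R = (\<lambda>\<omega>. Y \<omega> - inner_d d \<beta> X \<omega>)"
  have "risk M d X Y (\<beta>(i := \<beta> i + t))
          = (\<integral>\<omega>. (R \<omega>)\<^sup>2 - 2 * t * (X i \<omega> * R \<omega>) + t\<^sup>2 * (X i \<omega>)\<^sup>2 \<partial>M)"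
    unfolding risk_def inner_d_update[OF assms] R_def
    by (simp add: power2_eq_square algebra_simps)
  also have "\<dots> = (\<integral>\<omega>. (R \<omega>)\<^sup>2 \<partial>M) - 2 * t * (\<integral>\<omega>. X i \<omega> * R \<omega> \<partial>M)
                   + t\<^sup>2 * (\<integral>\<omega>. (X i \<omega>)\<^sup>2 \<partial>M)"
    using residual_square_integrable integrable_X_mult_residual[OF assms] X_sq[OF assms]
    unfolding R_def by simp
  finally show ?thesis unfolding risk_def Zres_def R_def .
qed

lemma restricted_min_Zres_eq_0:
  assumes min: "is_restricted_min M d X Y S \<beta>" and i: "i \<in> S" "i < d"
  shows "Zres M d X Y \<beta> i = 0"
proof (rule linear_coeff_eq_0_if_quadratic_nonneg)
  show "0 \<le> (\<integral>\<omega>. (X i \<omega>)\<^sup>2 \<partial>M)" by simp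
  fix t
  have "supp_in (\<beta>(i := \<beta> i + t)) S"
    using min i unfolding is_restricted_min_def supp_in_def by auto
  then have "risk M d X Y \<beta> \<le> risk M d X Y (\<beta>(i := \<beta> i + t))"
    using min unfolding is_restricted_min_def by blast
  then show "0 \<le> t\<^sup>2 * (\<integral>\<omega>. (X i \<omega>)\<^sup>2 \<partial>M) - 2 * t * Zres M d X Y \<beta> i"
    using risk_update[OF i(2)] by simp
qed

lemma abs_Zres_le_Max_diff:
  assumes "is_restricted_min M d X Y S \<beta>" "finite F" "i \<in> F" "i < d"
  shows "\<bar>Zres M d X Y \<beta> i\<bar> \<le> Max (insert 0 {\<bar>Zres M d X Y \<beta> k\<bar> | k. k \<in> F - S})"
  using assms restricted_min_Zres_eq_0[OF assms(1)] by (cases "i \<in> S") (auto intro: Max_ge)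

lemma Zres_eq_0_if_cond_exp_eq_0:
  assumes "prob_space M"
    and "AE \<omega> in M. real_cond_exp M (sigma_x M d X) (\<lambda>\<omega>'. Y \<omega>' - inner_d d \<beta> X \<omega>') \<omega> = 0"
    and "j < d"
  shows "Zres M d X Y \<beta> j = 0"
  unfolding Zres_def
  by (rule integral_mult_eq_0_if_cond_exp_eq_0[OF assms(1) X_rv residual_measurable assms(2)
        integrable_X_mult_residual[OF assms(3)] assms(3)])

lemma Zres_eq_cov_vec_scalar_prod:
  assumes "prob_space M" and X_mean: "\<And>i. i < d \<Longrightarrow> (\<integral>\<omega>. X i \<omega> \<partial>M) = 0"
    and noise: "AE \<omega> in M. real_cond_exp M (sigma_x M d X)
                  (\<lambda>\<omega>'. Y \<omega>' - inner_d d \<beta>star X \<omega>') \<omega> = 0"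
    and agree: "\<And>i. i < d \<Longrightarrow> i \<notin> F \<Longrightarrow> \<beta>star i = \<beta> i"
    and F: "F \<subseteq> {..<d}" and j: "j < d"
  shows "Zres M d X Y \<beta> j = cov_vec M X F j \<bullet> sub_vec F (\<lambda>i. \<beta>star i - \<beta> i)"
proof -
  have "Zres M d X Y \<beta> j = (\<Sum>i\<in>F. (\<beta>star i - \<beta> i) * (\<integral>\<omega>. X j \<omega> * X i \<omega> \<partial>M))"
    using Zres_diff[of F \<beta>star \<beta>, OF agree F j] Zres_eq_0_if_cond_exp_eq_0[OF assms(1) noise j] by simp
  also have "\<dots> = cov_vec M X F j \<bullet> sub_vec F (\<lambda>i. \<beta>star i - \<beta> i)"
    using F j finite_subset[OF F]
    by (auto simp: cov_vec_eq_sub_vec scalar_prod_sub_vec cov_centered X_mean mult.commute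
        intro!: sum.cong)
  finally show ?thesis .
qed

end

theorem lemma1:
  fixes M :: "'a measure" and d :: nat and X :: "nat \<Rightarrow> 'a \<Rightarrow> real"
    and Y :: "'a \<Rightarrow> real" and \<beta>star :: "nat \<Rightarrow> real"
    and S :: "nat set" and \<beta>S :: "nat \<Rightarrow> real"
  assumes "prob_space M"
    and X_rv: "\<And>i. i < d \<Longrightarrow> X i \<in> borel_measurable M"
    and X_sq: "\<And>i. i < d \<Longrightarrow> integrable M (\<lambda>\<omega>. (X i \<omega>)\<^sup>2)"
    and Y_rv: "Y \<in> borel_measurable M"
    and Y_sq: "integrable M (\<lambda>\<omega>. (Y \<omega>)\<^sup>2)"
    and X_mean: "\<And>i. i < d \<Longrightarrow> (\<integral>\<omega>. X i \<omega> \<partial>M) = 0"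
    and noise: "AE \<omega> in M. real_cond_exp M (sigma_x M d X)
                   (\<lambda>\<omega>'. Y \<omega>' - inner_d d \<beta>star X \<omega>') \<omega> = 0"
    and irr: "irrepresentable M X d (card {i. i < d \<and> \<beta>star i \<noteq> 0})"
    and S_sub: "S \<subseteq> {i. i < d \<and> \<beta>star i \<noteq> 0}"
    and bS: "is_restricted_min M d X Y S \<beta>S"
  shows "Max (insert 0 {\<bar>Zres M d X Y \<beta>S j\<bar> | j. j < d \<and> j \<notin> {i. i < d \<and> \<beta>star i \<noteq> 0}})
         \<le> mu M X d {i. i < d \<and> \<beta>star i \<noteq> 0}
           * Max (insert 0 {\<bar>Zres M d X Y \<beta>S i\<bar> | i. i \<in> {i. i < d \<and> \<beta>star i \<noteq> 0} - S})"
proof -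
  interpret square_integrable_design M d X Y
    using X_rv X_sq Y_rv Y_sq by unfold_locales
  define F where "F = {i. i < d \<and> \<beta>star i \<noteq> 0}"
  define Z where "Z = Zres M d X Y \<beta>S"
  define \<delta> where "\<delta> = sub_vec F (\<lambda>i. \<beta>star i - \<beta>S i)"
  define m where "m = Max (insert 0 {\<bar>Z i\<bar> | i. i \<in> F - S})"
  have F: "F \<subseteq> {..<d}" "finite F" and "S \<subseteq> F" using S_sub by (auto simp: F_def)
  have "\<beta>star i = \<beta>S i" if "i < d" "i \<notin> F" for i
    using bS \<open>S \<subseteq> F\<close> that by (auto simp: F_def supp_in_def is_restricted_min_def)
  then have Z_cov: "Z j = cov_vec M X F j \<bullet> \<delta>" if "j < d" for j
    unfolding Z_def \<delta>_def using Zres_eq_cov_vec_scalar_prod assms(1) X_mean noise F(1) that by blast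
  have Z_F: "Sigma_sub M X F *\<^sub>v \<delta> = sub_vec F Z"
    using idx_in[OF F(2)] F(1) by (intro eq_vecI) (auto simp: row_Sigma_sub intro!: Z_cov[symmetric])
  have m_nonneg: "0 \<le> m"
    unfolding m_def using F(2) by (intro Max_ge) auto
  have m_bound: "\<bar>(Sigma_sub M X F *\<^sub>v \<delta>) $ a\<bar> \<le> m" if "a < card F" for a
    unfolding Z_F using that idx_in[OF F(2) that] F abs_Zres_le_Max_diff[OF bS F(2)]
    by (auto simp: Z_def m_def)
  have \<Sigma>: "invertible_mat (Sigma_sub M X F)"
    using irr F unfolding irrepresentable_def F_def[symmetric] by auto
  have "\<bar>Z j\<bar> \<le> mu M X d F * m" if j: "j < d" "j \<notin> F" for j
  proof -
    have "\<bar>Z j\<bar> \<le> l1norm (mat_inv (Sigma_sub M X F) *\<^sub>v cov_vec M X F j) * m"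
      unfolding Z_cov[OF j(1)]
      by (intro abs_scalar_prod_le_l1norm_inverse m_bound)
        (auto simp: Sigma_sub_carrier transpose_Sigma_sub \<Sigma> \<delta>_def cov_vec_def)
    also have "\<dots> \<le> mu M X d F * m"
      by (rule mult_right_mono[OF l1norm_le_mu[OF j] m_nonneg])
    finally show ?thesis .
  qed
  then show ?thesis
    unfolding F_def[symmetric] Z_def[symmetric] m_def[symmetric]
    using mult_nonneg_nonneg[OF mu_nonneg m_nonneg] by auto
qed

end
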